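(* For every detector $\hat\theta$, every $p>1$, and every measurable $\zeta_1:\mathcal{X}\to[0,\infty)$ with $0<{\rm E}[\zeta_1(\mathbf{x})]<\infty$ and $0<{\rm E}\big[\zeta_1(\mathbf{x})^{\frac{p}{p-1}}\sum_{i=1}^M P(\theta_i|\mathbf{x})^{\frac{1}{1-p}}\big]<\infty$, $$P_e\geq (M-1)^p\,{\rm E}^p\big[\zeta_1(\mathbf{x})\big]\;{\rm E}^{1-p}\Big[\zeta_1(\mathbf{x})^{\frac{p}{p-1}}\sum_{i=1}^M P(\theta_i|\mathbf{x})^{\frac{1}{1-p}}\Big].$$
   Context: $M$-ary hypothesis testing: the true hypothesis $\theta$ is a random variable with values in $\{\theta_1,\ldots,\theta_M\}$, $\mathbf{x}$ is a random observation in a measurable space $\mathcal{X}$, and $P(\theta_i|\mathbf{x})$ is the posterior probability of $\theta_i$ given $\mathbf{x}$, assumed to satisfy $P(\theta_i|\mathbf{x})>0$ for all $\mathbf{x}$, $i$. A detector is a measurable map $\hat\theta:\mathcal{X}\to\{\theta_1,\ldots,\theta_M\}$, and its probability of error is $P_e=\Pr(\hat\theta(\mathbf{x})\neq\theta)$. ${\rm E}^a[Y]$ denotes $({\rm E}[Y])^a$. *)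

theory Defs
  imports "HOL-Probability.Probability"
begin

end

theory Submission
  imports Defs
begin

(* Write q = p/(p-1) for the conjugate exponent and R(y) = sum_{i <> det y} P(theta_i|y)
   for the posterior mass of the hypotheses the detector rejects; then P_e = E[R(x)].
   For every scale c > 0, Young's inequality u v <= u^p/p + v^q/q applied to each
   rejected hypothesis gives the pointwise bound
     (M-1) zeta <= c R/p + c^(-q/p) zeta^q (sum_i P(theta_i|y)^(1/(1-p))) / q.
   Taking expectations yields (M-1) E[zeta] <= c P_e/p + c^(-q/p) E_2/q for all c > 0,
   and choosing c optimally turns this into ((M-1) E[zeta])^p <= P_e E_2^(p-1),
   which is the claimed inequality. *)

text \<open>Young's inequality with a free scale c > 0: z <= c a/p + c^(-q/p) z^q a^(1/(1-p))/q
  for z >= 0 and a > 0; it is u v <= u^p/p + v^q/q for u = (c a)^(1/p), v = z (c a)^(-1/p).\<close>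

lemma young_scaled:
  fixes z a c p q :: real
  assumes z: "z \<ge> 0" and a: "a > 0" and c: "c > 0" and p: "p > 1" and q: "q = p/(p-1)"
  shows "z \<le> c*a/p + c powr (-q/p) * (z powr q * a powr (1/(1-p))) / q"
proof (cases "z = 0")
  case True
  have "q > 0" using p q by simp
  then show ?thesis using True c a p by simp
next
  case False
  hence zp: "z > 0" using z by simp
  have q1: "q > 1" using p q by (simp add: less_divide_eq)
  have pq: "1/p + 1/q = 1" unfolding q using p by (simp add: divide_simps)
  define u where "u = (c*a) powr (1/p)"
  define v where "v = z * (c*a) powr (-1/p)"
  have ca: "c*a > 0" using a c by simp
  have "u * v = z" unfolding u_def v_def using ca a c
    by (simp add: powr_minus_divide divide_simps powr_minus)
  moreover have "u powr p = c*a" unfolding u_def using ca p by (simp add: powr_powr)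
  moreover have "v powr q = c powr (-q/p) * (z powr q * a powr (1/(1-p)))"
  proof -
    have "v powr q = z powr q * (c*a) powr (-q/p)" unfolding v_def using ca zp
      by (simp add: powr_mult powr_powr)
    also have "(c*a) powr (-q/p) = c powr (-q/p) * a powr (-q/p)" using a c by (simp add: powr_mult)
    also have "a powr (-q/p) = a powr (1/(1-p))"
    proof -
      have "-q/p = 1/(1-p)" unfolding q using p by (simp add: divide_simps)
      then show ?thesis by simp
    qed
    finally show ?thesis by (simp add: mult_ac)
  qed
  moreover have "u * v \<le> u powr p / p + v powr q / q"
    by (rule Youngs_inequality[OF p q1 pq]) (auto simp: u_def v_def z)
  ultimately show ?thesis by (simp add: mult.assoc)
qed

lemma young_sum_except:
  fixes z c p q :: real and a :: "nat \<Rightarrow> real" and j m :: nat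
  assumes z: "z \<ge> 0" and c: "c > 0" and p: "p > 1" and q: "q = p/(p-1)" and j: "j < m"
    and a: "\<And>i. i < m \<Longrightarrow> a i > 0"
  shows "(real m - 1) * z \<le> c/p * (\<Sum>i<m. if j \<noteq> i then a i else 0)
          + c powr (-q/p) / q * (z powr q * (\<Sum>i<m. a i powr (1/(1-p))))"
proof -
  have q0: "q > 0" using p q by simp
  have "(\<Sum>i<m. z) = z + (\<Sum>i\<in>{..<m}-{j}. z)" using j by (subst sum.remove[of _ j]) auto
  moreover have "(\<Sum>i<m. if j \<noteq> i then z else 0) = (\<Sum>i\<in>{..<m}-{j}. z)"
    by (rule sum.mono_neutral_cong_right) auto
  ultimately have "(real m - 1) * z = (\<Sum>i<m. if j \<noteq> i then z else 0)"
    by (simp add: algebra_simps)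
  also have "\<dots> \<le> (\<Sum>i<m. c/p * (if j \<noteq> i then a i else 0)
          + c powr (-q/p) / q * (z powr q * a i powr (1/(1-p))))"
  proof (rule sum_mono)
    fix i assume "i \<in> {..<m}"
    hence ai: "a i > 0" using a by simp
    have nn: "0 \<le> c powr (-q/p) / q * (z powr q * a i powr (1/(1-p)))"
      using q0 by simp
    show "(if j \<noteq> i then z else 0) \<le> c/p * (if j \<noteq> i then a i else 0)
          + c powr (-q/p) / q * (z powr q * a i powr (1/(1-p)))"
    proof (cases "j = i")
      case True thus ?thesis using nn by simp
    next
      case False
      have "z \<le> c*a i/p + c powr (-q/p) * (z powr q * a i powr (1/(1-p))) / q"
        by (rule young_scaled[OF z ai c p q])
      thus ?thesis using False by simp
    qed
  qed
  also have "\<dots> = c/p * (\<Sum>i<m. if j \<noteq> i then a i else 0)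
          + c powr (-q/p) / q * (z powr q * (\<Sum>i<m. a i powr (1/(1-p))))"
    by (simp add: sum.distrib sum_distrib_left)
  finally show ?thesis .
qed


text \<open>Optimising the scale, degenerate case: a nonnegative quantity bounded by a multiple of
  c^(-r), r > 0, for every scale c > 0 vanishes (let c tend to infinity).\<close>

lemma nonpos_of_le_vanishing_scale:
  fixes A K r :: real
  assumes K: "K > 0" and r: "r > 0"
    and H: "\<And>c. c > 0 \<Longrightarrow> A \<le> c powr (-r) * K"
  shows "A \<le> 0"
proof (rule ccontr)
  assume "\<not> A \<le> 0"
  then have A: "A > 0" by simp
  define c where "c = (A / (2 * K)) powr (-1/r)"
  have c: "c > 0" using A K by (simp add: c_def)
  have "c powr (-r) = A / (2 * K)"
    unfolding c_def using A K r by (simp add: powr_powr)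
  then have "A \<le> A / 2" using H[OF c] K by simp
  with A show False by simp
qed

lemma balanced_scale:
  fixes P B p q :: real
  assumes P: "P > 0" and B: "B > 0" and p: "p > 1" and q: "q = p/(p-1)"
  defines "c \<equiv> (B/P) powr (1/q)"
  shows "c > 0" and "c * P = P powr (1/p) * B powr (1/q)"
    and "c powr (-q/p) * B = P powr (1/p) * B powr (1/q)"
proof -
  have q_pos: "q > 0" using p q by simp
  have iq: "1/q = 1 - 1/p" unfolding q using p by (simp add: divide_simps)
  have split_power: "y powr (1/p) * y powr (1/q) = y" if "y > 0" for y :: real
    using that iq by (simp add: powr_add[symmetric])
  show "c > 0" using P B by (simp add: c_def)
  show "c * P = P powr (1/p) * B powr (1/q)"
    unfolding c_def using P B iq split_power[OF P]
    by (simp add: powr_divide powr_diff field_simps)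
  show "c powr (-q/p) * B = P powr (1/p) * B powr (1/q)"
    unfolding c_def using P B iq p q_pos split_power[OF B]
    by (simp add: powr_divide powr_powr powr_diff field_simps powr_minus)
qed

lemma optimise_scale:
  fixes A P B p q :: real
  assumes A: "A \<ge> 0" and P: "P \<ge> 0" and B: "B > 0" and p: "p > 1" and q: "q = p/(p-1)"
    and H: "\<And>c. c > 0 \<Longrightarrow> A \<le> c*P/p + c powr (-q/p) * B / q"
  shows "A powr p \<le> P * B powr (p-1)"
proof (cases "P = 0")
  case True
  have q_pos: "q > 0" using p q by simp
  have "A \<le> 0"
    by (rule nonpos_of_le_vanishing_scale[of "B / q" "q / p"]) (use B q_pos p H True in auto)
  then show ?thesis using A B P by simp
next
  case False
  then have P_pos: "P > 0" using P by simp
  define X where "X = P powr (1/p) * B powr (1/q)"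
  note balanced = balanced_scale[OF P_pos B p q]
  have conj: "1/p + 1/q = 1" unfolding q using p by (simp add: divide_simps)
  have "A \<le> X/p + X/q"
    using H[OF balanced(1)] balanced(2,3) by (simp add: X_def mult.assoc)
  also have "\<dots> = X * (1/p + 1/q)" by (simp add: field_simps)
  also have "\<dots> = X" using conj by simp
  finally have "A powr p \<le> X powr p" using A p by (simp add: powr_mono2)
  also have "X powr p = P powr (1/p*p) * B powr (1/q*p)"
    unfolding X_def using P_pos B by (simp add: powr_mult powr_powr)
  also have "\<dots> = P * B powr (p - 1)"
    unfolding q using p P_pos by (simp add: divide_simps)
  finally show ?thesis .
qed

lemma (in prob_space) expectation_scale_bound:
  fixes A R F :: "'a \<Rightarrow> real" and p q :: real
  assumes p: "p > 1" and q: "q = p/(p-1)"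
    and int_A: "integrable M A" and int_R: "integrable M R" and int_F: "integrable M F"
    and A_nonneg: "expectation A \<ge> 0" and R_nonneg: "expectation R \<ge> 0"
    and F_pos: "expectation F > 0"
    and pointwise: "\<And>c \<omega>. c > 0 \<Longrightarrow> \<omega> \<in> space M \<Longrightarrow>
                      A \<omega> \<le> c * R \<omega> / p + c powr (-q/p) * F \<omega> / q"
  shows "expectation A powr p \<le> expectation R * expectation F powr (p - 1)"
proof (rule optimise_scale[OF A_nonneg R_nonneg F_pos p q])
  fix c :: real assume c: "c > 0"
  have "expectation A \<le> expectation (\<lambda>\<omega>. c / p * R \<omega> + c powr (-q/p) / q * F \<omega>)"
    using pointwise[OF c] by (intro integral_mono) (auto simp: int_A int_R int_F)
  also have "\<dots> = c / p * expectation R + c powr (-q/p) / q * expectation F"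
    using int_R int_F by simp
  finally show "expectation A \<le> c * expectation R / p + c powr (-q/p) * expectation F / q"
    by simp
qed

definition rejected_mass :: "(nat \<Rightarrow> 'x \<Rightarrow> real) \<Rightarrow> nat \<Rightarrow> ('x \<Rightarrow> nat) \<Rightarrow> 'x \<Rightarrow> real" where
  "rejected_mass post m detector y = (\<Sum>i<m. if detector y \<noteq> i then post i y else 0)"

lemma rejected_mass_scaled_bound:
  fixes post :: "nat \<Rightarrow> 'x \<Rightarrow> real" and detector :: "'x \<Rightarrow> nat" and z c p q :: real
  assumes z: "z \<ge> 0" and c: "c > 0" and p: "p > 1" and q: "q = p/(p-1)"
    and det: "detector y < m" and post_pos: "\<And>i. i < m \<Longrightarrow> post i y > 0"
  shows "(real m - 1) * z \<le> c * rejected_mass post m detector y / p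
           + c powr (-q/p) * (z powr q * (\<Sum>i<m. post i y powr (1 / (1 - p)))) / q"
  using young_sum_except[OF z c p q det, of "\<lambda>i. post i y"] post_pos
  by (simp add: rejected_mass_def)

lemma (in prob_space) posterior_event_expectation:
  fixes x :: "'a \<Rightarrow> 'x" and theta :: "'a \<Rightarrow> nat" and post :: "'x \<Rightarrow> real"
  assumes x_meas: "x \<in> measurable M X"
    and post_meas: "post \<in> borel_measurable X"
    and post_nonneg: "\<And>y. y \<in> space X \<Longrightarrow> post y \<ge> 0"
    and A: "A \<in> sets X"
    and posterior: "emeasure M {\<omega> \<in> space M. theta \<omega> = i \<and> x \<omega> \<in> A}
                      = (\<integral>\<^sup>+ y \<in> A. ennreal (post y) \<partial>distr M X x)"
  shows "integrable M (\<lambda>\<omega>. indicator A (x \<omega>) * post (x \<omega>))"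
    and "prob {\<omega> \<in> space M. theta \<omega> = i \<and> x \<omega> \<in> A}
           = expectation (\<lambda>\<omega>. indicator A (x \<omega>) * post (x \<omega>))"
proof -
  let ?g = "\<lambda>\<omega>. indicator A (x \<omega>) * post (x \<omega>)"
  have g_meas: "?g \<in> borel_measurable M"
    using measurable_compose[OF x_meas borel_measurable_indicator[OF A]]
      measurable_compose[OF x_meas post_meas] by (rule borel_measurable_times)
  have g_nonneg: "\<And>\<omega>. \<omega> \<in> space M \<Longrightarrow> ?g \<omega> \<ge> 0"
    using post_nonneg measurable_space[OF x_meas] by simp
  have "(\<integral>\<^sup>+ \<omega>. ennreal (?g \<omega>) \<partial>M) = (\<integral>\<^sup>+ y \<in> A. ennreal (post y) \<partial>distr M X x)"
    using post_meas A
    by (subst nn_integral_distr[OF x_meas]) (auto intro!: nn_integral_cong simp: indicator_def)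
  also have "\<dots> = emeasure M {\<omega> \<in> space M. theta \<omega> = i \<and> x \<omega> \<in> A}"
    using posterior by simp
  finally have nn: "(\<integral>\<^sup>+ \<omega>. ennreal (?g \<omega>) \<partial>M) = emeasure M {\<omega> \<in> space M. theta \<omega> = i \<and> x \<omega> \<in> A}" .
  show "integrable M ?g"
    using g_meas g_nonneg nn by (intro integrableI_nonneg) (auto simp: less_top[symmetric])
  show "prob {\<omega> \<in> space M. theta \<omega> = i \<and> x \<omega> \<in> A} = expectation ?g"
    using g_meas g_nonneg nn by (subst integral_eq_nn_integral) (auto simp: measure_def)
qed

lemma (in prob_space) error_probability_eq_rejected_mass:
  fixes x :: "'a \<Rightarrow> 'x" and theta :: "'a \<Rightarrow> nat" and post :: "nat \<Rightarrow> 'x \<Rightarrow> real"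
    and detector :: "'x \<Rightarrow> nat"
  assumes x_meas: "x \<in> measurable M X"
    and theta_meas: "theta \<in> measurable M (count_space UNIV)"
    and theta_range: "\<And>\<omega>. \<omega> \<in> space M \<Longrightarrow> theta \<omega> < m"
    and post_meas: "\<And>i. i < m \<Longrightarrow> post i \<in> borel_measurable X"
    and post_nonneg: "\<And>i y. i < m \<Longrightarrow> y \<in> space X \<Longrightarrow> post i y \<ge> 0"
    and posterior: "\<And>i A. i < m \<Longrightarrow> A \<in> sets X \<Longrightarrow>
        emeasure M {\<omega> \<in> space M. theta \<omega> = i \<and> x \<omega> \<in> A}
          = (\<integral>\<^sup>+ y \<in> A. ennreal (post i y) \<partial>distr M X x)"
    and det_meas: "detector \<in> measurable X (count_space UNIV)"
  shows "integrable M (\<lambda>\<omega>. rejected_mass post m detector (x \<omega>))"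
    and "prob {\<omega> \<in> space M. detector (x \<omega>) \<noteq> theta \<omega>}
           = expectation (\<lambda>\<omega>. rejected_mass post m detector (x \<omega>))"
proof -
  define A where "A i = {y \<in> space X. detector y \<noteq> i}" for i
  define S where "S i = {\<omega> \<in> space M. theta \<omega> = i \<and> x \<omega> \<in> A i}" for i
  define g where "g i = (\<lambda>\<omega>. indicator (A i) (x \<omega>) * post i (x \<omega>))" for i
  have A_sets: "A i \<in> sets X" for i
  proof -
    have "A i = detector -` (UNIV - {i}) \<inter> space X" by (auto simp: A_def)
    then show ?thesis using measurable_sets[OF det_meas] by simp
  qed
  have S_sets: "S i \<in> sets M" for i
  proof -
    have "S i = (theta -` {i} \<inter> space M) \<inter> (x -` A i \<inter> space M)" by (auto simp: S_def)
    then show ?thesis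
      using measurable_sets[OF theta_meas] measurable_sets[OF x_meas A_sets] by auto
  qed
  have g_int: "integrable M (g i)" and g_exp: "prob (S i) = expectation (g i)" if i: "i < m" for i
    using posterior_event_expectation[OF x_meas post_meas[OF i] post_nonneg[OF i] A_sets[of i]
        posterior[OF i A_sets[of i]]]
    by (simp_all add: g_def S_def)
  have mass_eq: "rejected_mass post m detector (x \<omega>) = (\<Sum>i<m. g i \<omega>)" if "\<omega> \<in> space M" for \<omega>
    using measurable_space[OF x_meas that]
    unfolding rejected_mass_def g_def A_def by (intro sum.cong) (simp_all add: indicator_def)
  have error_event: "{\<omega> \<in> space M. detector (x \<omega>) \<noteq> theta \<omega>} = (\<Union>i<m. S i)"
    using theta_range measurable_space[OF x_meas] by (auto simp: S_def A_def)
  have "integrable M (\<lambda>\<omega>. \<Sum>i<m. g i \<omega>)" using g_int by auto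
  then show "integrable M (\<lambda>\<omega>. rejected_mass post m detector (x \<omega>))"
    by (subst Bochner_Integration.integrable_cong[OF refl mass_eq]) simp_all
  have "prob (\<Union>i<m. S i) = (\<Sum>i<m. prob (S i))"
    using S_sets by (intro finite_measure_finite_Union) (auto simp: disjoint_family_on_def S_def)
  also have "\<dots> = expectation (\<lambda>\<omega>. \<Sum>i<m. g i \<omega>)" using g_int g_exp by simp
  also have "\<dots> = expectation (\<lambda>\<omega>. rejected_mass post m detector (x \<omega>))"
    by (intro Bochner_Integration.integral_cong) (simp_all add: mass_eq)
  finally show "prob {\<omega> \<in> space M. detector (x \<omega>) \<noteq> theta \<omega>}
      = expectation (\<lambda>\<omega>. rejected_mass post m detector (x \<omega>))"
    by (simp add: error_event)
qed

lemma (in prob_space) error_probability_lower_bound: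
  fixes x :: "'a \<Rightarrow> 'x" and theta :: "'a \<Rightarrow> nat" and post :: "nat \<Rightarrow> 'x \<Rightarrow> real"
    and detector :: "'x \<Rightarrow> nat" and zeta :: "'x \<Rightarrow> real" and p :: real
  assumes x_meas: "x \<in> measurable M X"
    and theta_meas: "theta \<in> measurable M (count_space UNIV)"
    and theta_range: "\<And>\<omega>. \<omega> \<in> space M \<Longrightarrow> theta \<omega> < m"
    and post_meas: "\<And>i. i < m \<Longrightarrow> post i \<in> borel_measurable X"
    and post_pos: "\<And>i y. i < m \<Longrightarrow> y \<in> space X \<Longrightarrow> post i y > 0"
    and posterior: "\<And>i A. i < m \<Longrightarrow> A \<in> sets X \<Longrightarrow>
        emeasure M {\<omega> \<in> space M. theta \<omega> = i \<and> x \<omega> \<in> A}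
          = (\<integral>\<^sup>+ y \<in> A. ennreal (post i y) \<partial>distr M X x)"
    and det_meas: "detector \<in> measurable X (count_space UNIV)"
    and det_range: "\<And>y. y \<in> space X \<Longrightarrow> detector y < m"
    and p: "p > 1"
    and zeta_nonneg: "\<And>y. y \<in> space X \<Longrightarrow> zeta y \<ge> 0"
    and int_zeta: "integrable M (\<lambda>\<omega>. zeta (x \<omega>))"
    and int_E2: "integrable M (\<lambda>\<omega>. zeta (x \<omega>) powr (p / (p - 1))
                     * (\<Sum>i<m. post i (x \<omega>) powr (1 / (1 - p))))"
    and E2_pos: "expectation (\<lambda>\<omega>. zeta (x \<omega>) powr (p / (p - 1))
                     * (\<Sum>i<m. post i (x \<omega>) powr (1 / (1 - p)))) > 0"
  shows "prob {\<omega> \<in> space M. detector (x \<omega>) \<noteq> theta \<omega>}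
    \<ge> (real m - 1) powr p * expectation (\<lambda>\<omega>. zeta (x \<omega>)) powr p
       * expectation (\<lambda>\<omega>. zeta (x \<omega>) powr (p / (p - 1))
              * (\<Sum>i<m. post i (x \<omega>) powr (1 / (1 - p)))) powr (1 - p)"
proof -
  define q where "q = p / (p - 1)"
  define R where "R = (\<lambda>\<omega>. rejected_mass post m detector (x \<omega>))"
  define F where "F = (\<lambda>\<omega>. zeta (x \<omega>) powr q * (\<Sum>i<m. post i (x \<omega>) powr (1 / (1 - p))))"
  define E1 E2 Pe where "E1 = expectation (\<lambda>\<omega>. zeta (x \<omega>))" and "E2 = expectation F"
    and "Pe = prob {\<omega> \<in> space M. detector (x \<omega>) \<noteq> theta \<omega>}"
  have x_space: "\<And>\<omega>. \<omega> \<in> space M \<Longrightarrow> x \<omega> \<in> space X"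
    using measurable_space[OF x_meas] .
  have post_nonneg: "\<And>i y. i < m \<Longrightarrow> y \<in> space X \<Longrightarrow> post i y \<ge> 0"
    using post_pos by (simp add: less_imp_le)
  note model = x_meas theta_meas theta_range post_meas post_nonneg posterior det_meas
  have R_int: "integrable M R"
    unfolding R_def using model by (rule error_probability_eq_rejected_mass(1))
  have Pe_eq: "Pe = expectation R"
    unfolding R_def Pe_def using model by (rule error_probability_eq_rejected_mass(2))
  have m_pos: "real m - 1 \<ge> 0"
  proof -
    obtain \<omega> where "\<omega> \<in> space M" using not_empty by blast
    then show ?thesis using theta_range by fastforce
  qed
  have pointwise: "(real m - 1) * zeta (x \<omega>) \<le> c * R \<omega> / p + c powr (-q/p) * F \<omega> / q"
    if "c > 0" "\<omega> \<in> space M" for c \<omega>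
  proof -
    have y: "x \<omega> \<in> space X" using x_space that(2) .
    show ?thesis
      using rejected_mass_scaled_bound[where detector = detector and y = "x \<omega>" and post = post,
          OF zeta_nonneg[OF y] that(1) p q_def det_range[OF y]] post_pos y
      by (simp add: R_def F_def)
  qed
  have E1_nonneg: "E1 \<ge> 0"
    unfolding E1_def using zeta_nonneg x_space by (intro integral_nonneg_AE) auto
  have R_nonneg: "expectation R \<ge> 0"
    using Pe_eq by (metis Pe_def measure_nonneg)
  have "((real m - 1) * E1) powr p \<le> Pe * E2 powr (p - 1)"
  proof -
    have "expectation (\<lambda>\<omega>. (real m - 1) * zeta (x \<omega>)) powr p
          \<le> expectation R * expectation F powr (p - 1)"
    proof (rule expectation_scale_bound[OF p q_def _ R_int])
      show "integrable M F" using int_E2 by (simp add: F_def q_def)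
      show "expectation F > 0" using E2_pos by (simp add: F_def q_def)
    qed (use int_zeta m_pos E1_nonneg R_nonneg pointwise in \<open>simp_all add: E1_def\<close>)
    then show ?thesis by (simp add: E1_def E2_def Pe_eq)
  qed
  then have "(real m - 1) powr p * E1 powr p * E2 powr (1 - p)
      \<le> Pe * E2 powr (p - 1) * E2 powr (1 - p)"
    using m_pos E1_nonneg by (simp add: powr_mult mult_right_mono)
  also have "\<dots> = Pe"
    using E2_pos by (simp add: E2_def F_def q_def mult.assoc powr_add[symmetric])
  finally show ?thesis by (simp add: Pe_def E1_def E2_def F_def q_def)
qed

lemma integrable_of_nn_integral_finite:
  fixes f :: "'a \<Rightarrow> real"
  assumes f_meas: "f \<in> borel_measurable M" and f_nonneg: "\<And>y. y \<in> space M \<Longrightarrow> f y \<ge> 0"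
    and finite: "(\<integral>\<^sup>+ y. ennreal (f y) \<partial>M) < \<infinity>"
  shows "integrable M f"
    and "0 < (\<integral>\<^sup>+ y. ennreal (f y) \<partial>M) \<Longrightarrow> 0 < integral\<^sup>L M f"
proof -
  show "integrable M f"
    using assms by (intro integrableI_nonneg) auto
  assume "0 < (\<integral>\<^sup>+ y. ennreal (f y) \<partial>M)"
  then show "0 < integral\<^sup>L M f"
    using assms by (simp add: integral_eq_nn_integral enn2real_positive_iff)
qed

theorem mainTheorem3:
  fixes M :: "'w measure" and X :: "'x measure"
    and x :: "'w \<Rightarrow> 'x" and theta :: "'w \<Rightarrow> nat" and m :: nat
    and post :: "nat \<Rightarrow> 'x \<Rightarrow> real"
    and detector :: "'x \<Rightarrow> nat" and zeta :: "'x \<Rightarrow> real" and p :: real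
  assumes "prob_space M"
    and x_meas: "x \<in> measurable M X"
    and theta_meas: "theta \<in> measurable M (count_space UNIV)"
    and theta_range: "\<And>\<omega>. \<omega> \<in> space M \<Longrightarrow> theta \<omega> < m"
    and post_meas: "\<And>i. i < m \<Longrightarrow> post i \<in> borel_measurable X"
    and post_pos: "\<And>i y. i < m \<Longrightarrow> y \<in> space X \<Longrightarrow> post i y > 0"
    and posterior: "\<And>i A. i < m \<Longrightarrow> A \<in> sets X \<Longrightarrow>
        emeasure M {\<omega> \<in> space M. theta \<omega> = i \<and> x \<omega> \<in> A}
          = (\<integral>\<^sup>+ y \<in> A. ennreal (post i y) \<partial>distr M X x)"
    and det_meas: "detector \<in> measurable X (count_space UNIV)"
    and det_range: "\<And>y. y \<in> space X \<Longrightarrow> detector y < m"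
    and p_gt: "p > 1"
    and zeta_meas: "zeta \<in> borel_measurable X"
    and zeta_nonneg: "\<And>y. y \<in> space X \<Longrightarrow> zeta y \<ge> 0"
    and E1_pos: "0 < (\<integral>\<^sup>+ \<omega>. ennreal (zeta (x \<omega>)) \<partial>M)"
    and E1_fin: "(\<integral>\<^sup>+ \<omega>. ennreal (zeta (x \<omega>)) \<partial>M) < \<infinity>"
    and E2_pos: "0 < (\<integral>\<^sup>+ \<omega>. ennreal (zeta (x \<omega>) powr (p / (p - 1))
                     * (\<Sum>i<m. post i (x \<omega>) powr (1 / (1 - p)))) \<partial>M)"
    and E2_fin: "(\<integral>\<^sup>+ \<omega>. ennreal (zeta (x \<omega>) powr (p / (p - 1))
                     * (\<Sum>i<m. post i (x \<omega>) powr (1 / (1 - p)))) \<partial>M) < \<infinity>"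
  shows "measure M {\<omega> \<in> space M. detector (x \<omega>) \<noteq> theta \<omega>}
    \<ge> (real m - 1) powr p
       * (\<integral>\<omega>. zeta (x \<omega>) \<partial>M) powr p
       * (\<integral>\<omega>. zeta (x \<omega>) powr (p / (p - 1))
              * (\<Sum>i<m. post i (x \<omega>) powr (1 / (1 - p))) \<partial>M) powr (1 - p)"
proof -
  interpret prob_space M by fact
  let ?E2 = "\<lambda>\<omega>. zeta (x \<omega>) powr (p / (p - 1)) * (\<Sum>i<m. post i (x \<omega>) powr (1 / (1 - p)))"
  have x_space: "\<And>\<omega>. \<omega> \<in> space M \<Longrightarrow> x \<omega> \<in> space X"
    using measurable_space[OF x_meas] .
  have zeta_x_meas: "(\<lambda>\<omega>. zeta (x \<omega>)) \<in> borel_measurable M"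
    using measurable_compose[OF x_meas zeta_meas] .
  have E2_meas: "?E2 \<in> borel_measurable M"
    using zeta_x_meas measurable_compose[OF x_meas post_meas]
    by (intro borel_measurable_times borel_measurable_sum powr_real_measurable) auto
  have E2_nonneg: "\<And>\<omega>. ?E2 \<omega> \<ge> 0"
    by (intro mult_nonneg_nonneg sum_nonneg) auto
  note zeta_int = integrable_of_nn_integral_finite[OF zeta_x_meas _ E1_fin]
  note E2_int = integrable_of_nn_integral_finite[OF E2_meas E2_nonneg E2_fin]
  show ?thesis
    using x_meas theta_meas theta_range post_meas post_pos posterior det_meas det_range p_gt
      zeta_nonneg
    by (rule error_probability_lower_bound)
      (use zeta_int zeta_nonneg x_space E2_int E2_pos in auto)
qed

end
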